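(* Consider the cyclic-schedule model in the context and fix a source $n$ with $p_n<1$. Then the long-run average of $\tilde S_{n,k}$ (the limit, almost surely, of $\frac1K'\sum_{k=1}^{K'}\tilde S_{n,k}$ as $K'\to\infty$), denoted $\tilde s_n$, satisfies $$\tilde s_n=\frac{1}{u_n}\Big(p_n s_n+\frac{1}{\alpha_n}\sum_{k=1}^{\alpha_n}s_{n,k-1}\Big)=\frac{1}{u_n}\Big(p_n s_n+\frac{1}{\alpha_n}\sum_{m\neq n}\alpha_m s_m\Big)=\frac{s_n}{u_n\tau_n}-s_n,$$ where $\tau_n=\frac{\alpha_n s_n}{\sum_{m=1}^N\alpha_m s_m}$ is the long-run fraction of time the channel is occupied by (successful or unsuccessful) source-$n$ transmissions.
   Context: Cyclic-schedule model: There are $N$ sources. A pattern $P=[P_0,\dots,P_{K-1}]$ with $P_k\in\{1,\dots,N\}$ is fixed, in which source $n$ appears $\alpha_n\ge 1$ times. Transmissions occur back-to-back; the $t$-th transmission ($t=0,1,2,\dots$) is from source $P_{t\bmod K}$. Service (transmission) times are mutually independent, and those of source $m$ are i.i.d. copies of a random variable $S_m$ with finite mean $s_m$ and finite second moment. Each transmission of source $m$ independently fails (packet drop) with probability $p_m\in[0,1)$ and succeeds with probability $u_m=1-p_m$. $\tilde S_{n,k}$ is the total time between the end of the $k$-th successful source-$n$ transmission and the beginning of the $(k+1)$-th successful source-$n$ transmission (i.e. the sum of service times of all transmissions strictly between them, including failed source-$n$ transmissions). For $k=0,\dots,\alpha_n-1$, $s_{n,k}$ is the sum of the mean service times $s_m$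 of the pattern entries strictly between the $k$-th and $(k+1)$-th appearances of source $n$ in $P$ (cyclically, the last gap wrapping around to the first appearance). *)

theory Defs
  imports "HOL-Probability.Probability"
begin

definition alpha :: "nat list \<Rightarrow> nat \<Rightarrow> nat" where
  "alpha P m = length (filter (\<lambda>x. x = m) P)"

definition positions :: "nat list \<Rightarrow> nat \<Rightarrow> nat list" where
  "positions P n = filter (\<lambda>j. P ! j = n) [0..<length P]"

text \<open>s_{n,k}, k = 0..alpha_n - 1: sum of the mean service times of the pattern entries strictly
  between the k-th and (k+1)-th appearance of n (cyclically, last gap wraps around).\<close>
definition gap_mean :: "nat list \<Rightarrow> (nat \<Rightarrow> real) \<Rightarrow> nat \<Rightarrow> nat \<Rightarrow> real" where
  "gap_mean P s n k =
     (let js = positions P n; K = length P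
      in (\<Sum>j\<in>{js ! k <..< (if Suc k < length js then js ! Suc k else js ! 0 + K)}.
            s (P ! (j mod K))))"

definition succ_set :: "nat list \<Rightarrow> (nat \<Rightarrow> 'a \<Rightarrow> bool) \<Rightarrow> nat \<Rightarrow> 'a \<Rightarrow> nat set" where
  "succ_set P D n \<omega> = {t. P ! (t mod length P) = n \<and> D t \<omega>}"

text \<open>Stilde_{n,k} (k \<ge> 1): total service time of all transmissions strictly between the
  k-th and (k+1)-th successful source-n transmission (enumerate is 0-based).\<close>
definition Stilde :: "nat list \<Rightarrow> (nat \<Rightarrow> 'a \<Rightarrow> real) \<Rightarrow> (nat \<Rightarrow> 'a \<Rightarrow> bool) \<Rightarrow> nat \<Rightarrow> nat \<Rightarrow> 'a \<Rightarrow> real" where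
  "Stilde P S D n k \<omega> =
     (\<Sum>t\<in>{enumerate (succ_set P D n \<omega>) (k - 1) <..< enumerate (succ_set P D n \<omega>) k}. S t \<omega>)"

end

theory Submission
  imports Defs "HOL-Real_Asymp.Real_Asymp" "HOL-Library.Discrete_Functions"
begin

text \<open>
  The successful source-n transmissions form a set E of transmission indices. Strong laws of
  large numbers for the K-periodic, independent service times and outcomes give the density
  alpha_n u_n / K of E and the time average (sum_j s(P_j) - alpha_n s_n u_n) / K of the service
  time spent outside E. The first k gaps add up to exactly the service time spent outside E
  between the first and the (k+1)-th success, so their average tends to the ratio of the two
  rates, sum_j s(P_j) / (alpha_n u_n) - s_n.

  The strong law is the elementary one for nonnegative uncorrelated variables with bounded
  second moments: Chebyshev's inequality and Borel-Cantelli along the squares, then monotone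
  interpolation; signed service times are split into positive and negative parts. The other two
  expressions for the limit follow by bookkeeping over one period of the pattern, which is
  covered exactly by the alpha_n gaps together with the alpha_n appearances of n.
\<close>

section \<open>Averages of deterministic sequences\<close>

lemma filterlim_floor_sqrt_at_top: "filterlim floor_sqrt at_top at_top"
  unfolding filterlim_at_top eventually_at_top_linorder
  by (metis le_floor_sqrtI)

lemma LIMSEQ_avg_of_mono_squares:
  fixes R :: "nat \<Rightarrow> real"
  assumes mono: "mono R" and nonneg: "\<And>T. 0 \<le> R T"
    and squares: "(\<lambda>j. R (j^2) / real (j^2)) \<longlonglongrightarrow> \<mu>"
  shows "(\<lambda>T. R T / real T) \<longlonglongrightarrow> \<mu>"
proof -
  define lower where "lower q = R (q^2) / real (q^2) * (real q / (real q + 1))^2" for q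
  define upper where "upper q = R ((Suc q)^2) / real ((Suc q)^2) * ((real q + 1) / real q)^2" for q
  have "lower \<longlonglongrightarrow> \<mu> * 1"
    unfolding lower_def by (intro tendsto_mult squares) real_asymp
  then have lower_lim: "(\<lambda>T. lower (floor_sqrt T)) \<longlonglongrightarrow> \<mu>"
    using filterlim_compose filterlim_floor_sqrt_at_top by fastforce
  have "upper \<longlonglongrightarrow> \<mu> * 1"
    unfolding upper_def by (intro tendsto_mult LIMSEQ_Suc[OF squares]) real_asymp
  then have upper_lim: "(\<lambda>T. upper (floor_sqrt T)) \<longlonglongrightarrow> \<mu>"
    using filterlim_compose filterlim_floor_sqrt_at_top by fastforce
  show ?thesis
  proof (rule tendsto_sandwich[OF _ _ lower_lim upper_lim])
    have "lower (floor_sqrt T) \<le> R T / real T \<and> R T / real T \<le> upper (floor_sqrt T)"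
      if T: "T \<ge> 1" for T
    proof -
      define q where "q = floor_sqrt T"
      have q: "q > 0" "q^2 \<le> T" "T < (Suc q)^2"
        using T Suc_floor_sqrt_power2_gt[of T] by (auto simp: q_def)
      have "real q ^ 2 \<le> real T"
        using q(2) by (simp flip: of_nat_power)
      moreover have "real T \<le> real ((Suc q)^2)"
        unfolding of_nat_le_iff using q(3) by simp
      ultimately have Tq: "real q ^ 2 \<le> real T" "real T \<le> (real q + 1)^2"
        by (simp_all add: add.commute)
      have "lower q = R (q^2) / (real q + 1)^2"
        using q by (simp add: lower_def field_simps)
      also have "\<dots> \<le> R T / (real q + 1)^2"
        by (intro divide_right_mono monoD[OF mono] q) simp
      also have "\<dots> \<le> R T / real T"
        using T Tq by (intro divide_left_mono nonneg) auto
      finally have "lower q \<le> R T / real T" .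
      have "R T / real T \<le> R ((Suc q)^2) / real T"
        using q by (intro divide_right_mono monoD[OF mono]) auto
      also have "\<dots> \<le> R ((Suc q)^2) / real q ^ 2"
        using T q Tq by (intro divide_left_mono nonneg) auto
      also have "\<dots> = upper q"
        using q by (simp add: upper_def field_simps)
      finally show ?thesis using \<open>lower q \<le> R T / real T\<close> by (simp add: q_def)
    qed
    then show "eventually (\<lambda>T. lower (floor_sqrt T) \<le> R T / real T) sequentially"
      and "eventually (\<lambda>T. R T / real T \<le> upper (floor_sqrt T)) sequentially"
      unfolding eventually_sequentially by blast+
  qed
qed

lemma sum_mod_window:
  fixes f :: "nat \<Rightarrow> real"
  assumes "K > 0"
  shows "(\<Sum>j\<in>{a..<a+K}. f (j mod K)) = (\<Sum>j<K. f j)"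
proof (induction a)
  case 0
  show ?case by (simp add: atLeast0LessThan)
next
  case (Suc a)
  have "f (a mod K) + (\<Sum>j\<in>{Suc a..<Suc a+K}. f (j mod K)) = (\<Sum>j\<in>{a..<Suc (a+K)}. f (j mod K))"
    by (simp add: sum.atLeast_Suc_lessThan)
  also have "\<dots> = (\<Sum>j\<in>{a..<a+K}. f (j mod K)) + f (a mod K)"
    by simp
  finally show ?case using Suc by simp
qed

lemma LIMSEQ_avg_periodic:
  fixes f :: "nat \<Rightarrow> real"
  assumes K: "K > 0"
  shows "(\<lambda>T. (\<Sum>t<T. f (t mod K)) / real T) \<longlonglongrightarrow> (\<Sum>j<K. f j) / real K"
proof -
  define F where "F = (\<Sum>j<K. f j)"
  define g where "g T = (\<Sum>t<T. f (t mod K)) - real T * F / real K" for T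
  have g_periodic: "g (T + K) = g T" for T
  proof -
    have "(\<Sum>t<T+K. f (t mod K)) = (\<Sum>t<T. f (t mod K)) + (\<Sum>t\<in>{T..<T+K}. f (t mod K))"
      using sum.atLeastLessThan_concat[of 0 T "T+K" "\<lambda>t. f (t mod K)"] by (simp add: atLeast0LessThan)
    also have "(\<Sum>t\<in>{T..<T+K}. f (t mod K)) = F"
      unfolding F_def by (rule sum_mod_window[OF K])
    finally show ?thesis
      using K by (simp add: g_def field_simps)
  qed
  have g_mod: "g T = g (T mod K)" for T
  proof -
    have "g (T mod K + q * K) = g (T mod K)" for q
    proof (induction q)
      case (Suc q)
      have "g (T mod K + Suc q * K) = g (T mod K + q * K + K)"
        by (rule arg_cong[where f = g]) simp
      then show ?case using Suc g_periodic[of "T mod K + q * K"] by simp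
    qed simp
    from this[of "T div K"] show ?thesis by (simp only: mod_div_mult_eq)
  qed
  define B where "B = (\<Sum>r<K. \<bar>g r\<bar>)"
  have g_bounded: "\<bar>g T\<bar> \<le> B" for T
  proof -
    have "\<bar>g (T mod K)\<bar> \<le> B"
      unfolding B_def using K by (intro member_le_sum) auto
    then show ?thesis by (simp only: g_mod[of T])
  qed
  have "(\<lambda>T. g T / real T) \<longlonglongrightarrow> 0"
  proof (rule Lim_null_comparison)
    show "eventually (\<lambda>T. norm (g T / real T) \<le> B / real T) sequentially"
      using g_bounded by (intro always_eventually allI) (simp add: abs_div divide_right_mono)
  qed real_asymp
  moreover have "eventually (\<lambda>T. g T / real T = (\<Sum>t<T. f (t mod K)) / real T - F / real K) sequentially"
  proof (rule eventually_sequentiallyI)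
    show "g T / real T = (\<Sum>t<T. f (t mod K)) / real T - F / real K" if "T \<ge> 1" for T
      using that K by (simp add: g_def diff_divide_distrib)
  qed
  ultimately have "(\<lambda>T. (\<Sum>t<T. f (t mod K)) / real T - F / real K) \<longlonglongrightarrow> 0"
    by (rule tendsto_cong[THEN iffD1, rotated])
  then show ?thesis
    unfolding F_def by (rule LIM_zero_cancel)
qed

lemma infinite_of_positive_density:
  fixes E :: "nat set"
  assumes "(\<lambda>T. real (card ({..<T} \<inter> E)) / real T) \<longlonglongrightarrow> \<gamma>" and "\<gamma> > 0"
  shows "infinite E"
proof
  assume "finite E"
  have "(\<lambda>T. real (card ({..<T} \<inter> E)) / real T) \<longlonglongrightarrow> 0"
  proof (rule Lim_null_comparison)
    show "eventually (\<lambda>T. norm (real (card ({..<T} \<inter> E)) / real T) \<le> real (card E) / real T) sequentially"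
      using \<open>finite E\<close> by (intro always_eventually allI) (simp add: card_mono divide_right_mono)
  qed real_asymp
  with assms show False
    using LIMSEQ_unique by fastforce
qed

lemma card_lessThan_enumerate:
  fixes E :: "nat set"
  assumes "infinite E"
  shows "card ({..<enumerate E k} \<inter> E) = k"
proof -
  have "{..<enumerate E k} \<inter> E = enumerate E ` {..<k}"
  proof
    show "{..<enumerate E k} \<inter> E \<subseteq> enumerate E ` {..<k}"
      using assms enumerate_Ex by fastforce
    show "enumerate E ` {..<k} \<subseteq> {..<enumerate E k} \<inter> E"
      using assms enumerate_in_set by auto
  qed
  moreover have "inj (enumerate E)"
    using assms by (intro strict_mono_imp_inj_on strict_monoI enumerate_mono)
  ultimately show ?thesis
    by (simp add: card_image inj_on_subset)
qed

lemma LIMSEQ_enumerate_div: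
  fixes E :: "nat set"
  assumes density: "(\<lambda>T. real (card ({..<T} \<inter> E)) / real T) \<longlonglongrightarrow> \<gamma>" and "\<gamma> > 0"
  shows "(\<lambda>k. real (enumerate E k) / real k) \<longlonglongrightarrow> 1 / \<gamma>"
proof -
  have inf: "infinite E"
    using assms by (rule infinite_of_positive_density)
  then have "filterlim (enumerate E) sequentially sequentially"
    by (intro filterlim_subseq strict_monoI enumerate_mono)
  from filterlim_compose[OF density this]
  have "(\<lambda>k. real k / real (enumerate E k)) \<longlonglongrightarrow> \<gamma>"
    by (simp add: card_lessThan_enumerate[OF inf])
  from tendsto_inverse[OF this] \<open>\<gamma> > 0\<close> show ?thesis
    by (simp add: inverse_eq_divide)
qed

lemma sum_between_enumerate_telescope:
  fixes x :: "nat \<Rightarrow> real" and E :: "nat set"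
  assumes inf: "infinite E"
  defines "B T \<equiv> \<Sum>t<T. of_bool (t \<notin> E) * x t"
  shows "(\<Sum>i=1..k. \<Sum>t\<in>{enumerate E (i - 1)<..<enumerate E i}. x t)
           = B (enumerate E k) - B (enumerate E 0)"
proof (induction k)
  case (Suc k)
  let ?e = "enumerate E"
  have lt: "?e k < ?e (Suc k)"
    using inf by simp
  have gap: "t \<notin> E" if "?e k < t" "t < ?e (Suc k)" for t
    using that inf enumerate_Ex[OF inf, of t] by (metis enumerate_mono_iff not_less_eq)
  have "B (?e (Suc k)) = B (?e k) + (\<Sum>t\<in>{?e k..<?e (Suc k)}. of_bool (t \<notin> E) * x t)"
    unfolding B_def atLeast0LessThan[symmetric] using lt
    by (intro sum.atLeastLessThan_concat[symmetric]) auto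
  also have "(\<Sum>t\<in>{?e k..<?e (Suc k)}. of_bool (t \<notin> E) * x t) = (\<Sum>t\<in>{?e k<..<?e (Suc k)}. x t)"
  proof -
    have "{?e k..<?e (Suc k)} \<inter> {t. t \<notin> E} = {?e k<..<?e (Suc k)}"
      using gap enumerate_in_set[OF inf, of k] by (auto simp: order.order_iff_strict)
    then show ?thesis by simp
  qed
  finally show ?case
    using Suc by simp
qed simp

lemma LIMSEQ_avg_sum_between_enumerate:
  fixes x :: "nat \<Rightarrow> real" and E :: "nat set"
  assumes density: "(\<lambda>T. real (card ({..<T} \<inter> E)) / real T) \<longlonglongrightarrow> \<gamma>" and "\<gamma> > 0"
    and reward: "(\<lambda>T. (\<Sum>t<T. of_bool (t \<notin> E) * x t) / real T) \<longlonglongrightarrow> \<rho>"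
  shows "(\<lambda>k. (\<Sum>i=1..k. \<Sum>t\<in>{enumerate E (i - 1)<..<enumerate E i}. x t) / real k)
           \<longlonglongrightarrow> \<rho> / \<gamma>"
proof -
  define e where "e = enumerate E"
  define B where "B T = (\<Sum>t<T. of_bool (t \<notin> E) * x t)" for T
  have inf: "infinite E"
    using density \<open>\<gamma> > 0\<close> by (rule infinite_of_positive_density)
  have "filterlim e sequentially sequentially"
    unfolding e_def using inf by (intro filterlim_subseq strict_monoI enumerate_mono)
  from filterlim_compose[OF reward this]
  have "(\<lambda>k. B (e k) / real (e k)) \<longlonglongrightarrow> \<rho>"
    unfolding B_def .
  then have "(\<lambda>k. B (e k) / real (e k) * (real (e k) / real k) - B (e 0) / real k) \<longlonglongrightarrow> \<rho> * (1 / \<gamma>) - 0"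
    using LIMSEQ_enumerate_div[OF density \<open>\<gamma> > 0\<close>] unfolding e_def
    by (intro tendsto_diff tendsto_mult) (assumption | real_asymp)+
  moreover have "B (e k) / real (e k) * (real (e k) / real k) - B (e 0) / real k
      = (\<Sum>i=1..k. \<Sum>t\<in>{e (i - 1)<..<e i}. x t) / real k" if "k \<ge> 1" for k
  proof -
    have "e k > 0"
      using le_enumerate[OF inf, of k] that unfolding e_def by linarith
    then show ?thesis
      unfolding sum_between_enumerate_telescope[OF inf] B_def e_def
      by (simp add: diff_divide_distrib)
  qed
  ultimately show ?thesis
    unfolding e_def by (auto intro: tendsto_cong[THEN iffD1, rotated] eventually_sequentiallyI)
qed

section \<open>A strong law for uncorrelated variables\<close>

lemma LIMSEQ_zero_of_eventually_less_inverse: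
  fixes y :: "nat \<Rightarrow> real"
  assumes "\<And>r. eventually (\<lambda>j. \<bar>y j\<bar> < inverse (real (Suc r))) sequentially"
  shows "y \<longlonglongrightarrow> 0"
proof (rule tendstoI)
  fix e :: real assume "e > 0"
  then obtain r where "inverse (real (Suc r)) < e"
    using reals_Archimedean by blast
  with assms[of r] show "eventually (\<lambda>j. dist (y j) 0 < e) sequentially"
    by (auto elim: eventually_mono)
qed

lemma (in prob_space) AE_tendsto_zero_along_squares:
  fixes Z :: "nat \<Rightarrow> 'a \<Rightarrow> real"
  assumes [measurable]: "\<And>T. Z T \<in> borel_measurable M"
    and square_int: "\<And>T. integrable M (\<lambda>\<omega>. (Z T \<omega>)^2)"
    and second_moment: "\<And>T. expectation (\<lambda>\<omega>. (Z T \<omega>)^2) \<le> C * real T"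
  shows "AE \<omega> in M. (\<lambda>j. Z (j^2) \<omega> / real (j^2)) \<longlonglongrightarrow> 0"
proof -
  define A where "A r j = {\<omega> \<in> space M. real ((Suc j)^2) / real (Suc r) \<le> \<bar>Z ((Suc j)^2) \<omega>\<bar>}" for r j
  have "AE \<omega> in M. eventually (\<lambda>j. \<omega> \<in> space M - A r j) sequentially" for r
  proof (rule borel_cantelli_AE1)
    show "A r j \<in> sets M" for j
      unfolding A_def by measurable
    show "emeasure M (A r j) < \<infinity>" for j
      by (simp add: less_top[symmetric])
    have Chebyshev: "measure M (A r j) \<le> C * real (Suc r)^2 * inverse (real (Suc j)^2)" for j
    proof -
      have "measure M (A r j)
          \<le> expectation (\<lambda>\<omega>. (Z ((Suc j)^2) \<omega>)^2) / (real ((Suc j)^2) / real (Suc r))^2"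
        unfolding A_def by (rule second_moment_method) (auto intro: square_int)
      also have "\<dots> \<le> C * real ((Suc j)^2) / (real ((Suc j)^2) / real (Suc r))^2"
        by (intro divide_right_mono second_moment) simp
      also have "\<dots> = C * real (Suc r)^2 * inverse (real (Suc j)^2)"
      proof -
        have "C * q / (q / c)^2 = C * c^2 * inverse q" if "q > 0" for q c :: real
          using that by (simp add: field_simps power2_eq_square)
        then show ?thesis by (simp del: of_nat_Suc)
      qed
      finally show ?thesis .
    qed
    have "summable (\<lambda>j. C * real (Suc r)^2 * inverse (real (Suc j)^2))"
      using summable_Suc_iff[THEN iffD2, OF inverse_power_summable[of 2, where 'a=real]]
      by (intro summable_mult) simp
    then show "summable (\<lambda>j. measure M (A r j))"
      by (rule summable_comparison_test') (use Chebyshev in \<open>simp del: of_nat_Suc\<close>)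
  qed
  then have "AE \<omega> in M. \<forall>r. eventually (\<lambda>j. \<omega> \<in> space M - A r j) sequentially"
    by (simp add: AE_all_countable)
  then show ?thesis
  proof (rule AE_mp, intro AE_I2 impI)
    fix \<omega> assume "\<omega> \<in> space M" and small: "\<forall>r. eventually (\<lambda>j. \<omega> \<in> space M - A r j) sequentially"
    have "eventually (\<lambda>j. \<bar>Z ((Suc j)^2) \<omega> / real ((Suc j)^2)\<bar> < inverse (real (Suc r))) sequentially" for r
      using small[rule_format, of r]
      by eventually_elim (simp add: A_def abs_div field_simps not_le del: of_nat_Suc)
    then have "(\<lambda>j. Z ((Suc j)^2) \<omega> / real ((Suc j)^2)) \<longlonglongrightarrow> 0"
      by (rule LIMSEQ_zero_of_eventually_less_inverse)
    then show "(\<lambda>j. Z (j^2) \<omega> / real (j^2)) \<longlonglongrightarrow> 0"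
      by (rule LIMSEQ_imp_Suc)
  qed
qed

lemma (in prob_space) centered_sum_second_moment:
  fixes X :: "nat \<Rightarrow> 'a \<Rightarrow> real"
  assumes [measurable]: "\<And>t. X t \<in> borel_measurable M"
    and square_int: "\<And>t. integrable M (\<lambda>\<omega>. (X t \<omega>)^2)"
    and bound: "\<And>t. expectation (\<lambda>\<omega>. (X t \<omega>)^2) \<le> C"
    and product_int: "\<And>t t'. t \<noteq> t' \<Longrightarrow> integrable M (\<lambda>\<omega>. X t \<omega> * X t' \<omega>)"
    and uncorrelated: "\<And>t t'. t \<noteq> t' \<Longrightarrow>
          expectation (\<lambda>\<omega>. X t \<omega> * X t' \<omega>) = expectation (X t) * expectation (X t')"
  defines "Z T \<omega> \<equiv> \<Sum>t<T. X t \<omega> - expectation (X t)"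
  shows "integrable M (\<lambda>\<omega>. (Z T \<omega>)^2)" and "expectation (\<lambda>\<omega>. (Z T \<omega>)^2) \<le> C * real T"
proof -
  define m where "m t = expectation (X t)" for t
  have int: "integrable M (X t)" for t
    by (rule square_integrable_imp_integrable) (auto intro: square_int)
  have product:
    "integrable M (\<lambda>\<omega>. (X t \<omega> - m t) * (X t' \<omega> - m t')) \<and>
     expectation (\<lambda>\<omega>. (X t \<omega> - m t) * (X t' \<omega> - m t')) \<le> (if t = t' then C else 0)" for t t'
  proof (cases "t = t'")
    case True
    have "(\<lambda>\<omega>. (X t \<omega> - m t) * (X t' \<omega> - m t')) = (\<lambda>\<omega>. (X t \<omega>)^2 - 2 * m t * X t \<omega> + (m t)^2)"
      using True by (auto simp: power2_eq_square algebra_simps)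
    moreover have "expectation (\<lambda>\<omega>. (X t \<omega>)^2) - 2 * m t * m t + (m t)^2 \<le> C"
      using bound[of t] zero_le_square[of "m t"] by (simp add: power2_eq_square del: zero_le_square)
    ultimately show ?thesis
      using True square_int int by (simp add: m_def prob_space)
  next
    case False
    have "(\<lambda>\<omega>. (X t \<omega> - m t) * (X t' \<omega> - m t'))
        = (\<lambda>\<omega>. X t \<omega> * X t' \<omega> - m t' * X t \<omega> - m t * X t' \<omega> + m t * m t')"
      by (auto simp: algebra_simps)
    then show ?thesis
      using False product_int[OF False] uncorrelated[OF False] int by (simp add: m_def prob_space)
  qed
  have Z_square: "(Z T \<omega>)^2 = (\<Sum>t<T. \<Sum>t'<T. (X t \<omega> - m t) * (X t' \<omega> - m t'))" for \<omega>
    by (simp add: Z_def m_def power2_eq_square sum_product)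
  show "integrable M (\<lambda>\<omega>. (Z T \<omega>)^2)"
    unfolding Z_square using product by auto
  have "expectation (\<lambda>\<omega>. (Z T \<omega>)^2)
      = (\<Sum>t<T. \<Sum>t'<T. expectation (\<lambda>\<omega>. (X t \<omega> - m t) * (X t' \<omega> - m t')))"
    unfolding Z_square using product by (simp add: Bochner_Integration.integral_sum)
  also have "\<dots> \<le> (\<Sum>t<T. \<Sum>t'<T. if t = t' then C else 0)"
    using product by (intro sum_mono) blast
  also have "\<dots> = C * real T"
    by simp
  finally show "expectation (\<lambda>\<omega>. (Z T \<omega>)^2) \<le> C * real T" .
qed

theorem (in prob_space) slln_uncorrelated_nonneg:
  fixes X :: "nat \<Rightarrow> 'a \<Rightarrow> real"
  assumes [measurable]: "\<And>t. X t \<in> borel_measurable M"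
    and nonneg: "\<And>t \<omega>. \<omega> \<in> space M \<Longrightarrow> 0 \<le> X t \<omega>"
    and square_int: "\<And>t. integrable M (\<lambda>\<omega>. (X t \<omega>)^2)"
    and bound: "\<And>t. expectation (\<lambda>\<omega>. (X t \<omega>)^2) \<le> C"
    and product_int: "\<And>t t'. t \<noteq> t' \<Longrightarrow> integrable M (\<lambda>\<omega>. X t \<omega> * X t' \<omega>)"
    and uncorrelated: "\<And>t t'. t \<noteq> t' \<Longrightarrow>
          expectation (\<lambda>\<omega>. X t \<omega> * X t' \<omega>) = expectation (X t) * expectation (X t')"
    and mean_avg: "(\<lambda>T. (\<Sum>t<T. expectation (X t)) / real T) \<longlonglongrightarrow> \<mu>"
  shows "AE \<omega> in M. (\<lambda>T. (\<Sum>t<T. X t \<omega>) / real T) \<longlonglongrightarrow> \<mu>"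
proof -
  define Z where "Z T \<omega> = (\<Sum>t<T. X t \<omega> - expectation (X t))" for T \<omega>
  have [measurable]: "Z T \<in> borel_measurable M" for T
    unfolding Z_def by measurable
  have "integrable M (\<lambda>\<omega>. (Z T \<omega>)^2)" for T
    unfolding Z_def using assms(1) square_int bound product_int uncorrelated
    by (rule centered_sum_second_moment(1))
  moreover have "expectation (\<lambda>\<omega>. (Z T \<omega>)^2) \<le> C * real T" for T
    unfolding Z_def using assms(1) square_int bound product_int uncorrelated
    by (rule centered_sum_second_moment(2))
  ultimately have "AE \<omega> in M. (\<lambda>j. Z (j^2) \<omega> / real (j^2)) \<longlonglongrightarrow> 0"
    by (intro AE_tendsto_zero_along_squares) simp_all
  then show ?thesis
  proof (rule AE_mp, intro AE_I2 impI)
    fix \<omega> assume "\<omega> \<in> space M" and Z_lim: "(\<lambda>j. Z (j^2) \<omega> / real (j^2)) \<longlonglongrightarrow> 0"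
    define R where "R T = (\<Sum>t<T. X t \<omega>)" for T
    have R_split: "R T / real T = Z T \<omega> / real T + (\<Sum>t<T. expectation (X t)) / real T" for T
      by (simp add: R_def Z_def sum_subtractf add_divide_distrib[symmetric])
    have "strict_mono (\<lambda>j::nat. j^2)"
      by (rule strict_monoI) (simp add: power_strict_mono)
    from filterlim_compose[OF mean_avg filterlim_subseq[OF this]]
    have "(\<lambda>j. R (j^2) / real (j^2)) \<longlonglongrightarrow> 0 + \<mu>"
      unfolding R_split by (intro tendsto_add Z_lim)
    moreover have "mono R"
      unfolding R_def using nonneg[OF \<open>\<omega> \<in> space M\<close>] by (intro monoI sum_mono2) auto
    moreover have "0 \<le> R T" for T
      unfolding R_def using nonneg[OF \<open>\<omega> \<in> space M\<close>] by (intro sum_nonneg) auto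
    ultimately show "(\<lambda>T. (\<Sum>t<T. X t \<omega>) / real T) \<longlonglongrightarrow> \<mu>"
      using LIMSEQ_avg_of_mono_squares[of R \<mu>] unfolding R_def by simp
  qed
qed

section \<open>Periodic service times and outcomes\<close>

lemma (in prob_space) expectation_comp_eq_of_distr_eq:
  fixes \<phi> :: "'b \<Rightarrow> real"
  assumes [measurable]: "X \<in> measurable M N" "Y \<in> measurable M N" "\<phi> \<in> borel_measurable N"
    and "distr M N X = distr M N Y"
  shows "expectation (\<lambda>\<omega>. \<phi> (X \<omega>)) = expectation (\<lambda>\<omega>. \<phi> (Y \<omega>))"
proof -
  have "expectation (\<lambda>\<omega>. \<phi> (X \<omega>)) = integral\<^sup>L (distr M N X) \<phi>"
    by (rule integral_distr[symmetric]) simp_all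
  also have "\<dots> = integral\<^sup>L (distr M N Y) \<phi>"
    by (simp only: \<open>distr M N X = distr M N Y\<close>)
  also have "\<dots> = expectation (\<lambda>\<omega>. \<phi> (Y \<omega>))"
    by (rule integral_distr) simp_all
  finally show ?thesis .
qed

lemma (in prob_space) expectation_fun_of_bool:
  fixes D :: "'a \<Rightarrow> bool" and f :: "bool \<Rightarrow> real"
  assumes [measurable]: "D \<in> measurable M (count_space UNIV)"
  shows "expectation (\<lambda>\<omega>. f (D \<omega>))
           = f True * (1 - prob {\<omega> \<in> space M. \<not> D \<omega>}) + f False * prob {\<omega> \<in> space M. \<not> D \<omega>}"
proof -
  define F where "F = {\<omega> \<in> space M. \<not> D \<omega>}"
  have [measurable]: "F \<in> sets M"
    unfolding F_def by measurable
  have "expectation (\<lambda>\<omega>. f (D \<omega>))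
      = expectation (\<lambda>\<omega>. f True * indicator (space M - F) \<omega> + f False * indicator F \<omega>)"
    by (intro Bochner_Integration.integral_cong) (auto simp: F_def indicator_def)
  also have "\<dots> = f True * prob (space M - F) + f False * prob F"
    by (simp add: Bochner_Integration.integral_add less_top[symmetric])
  finally show ?thesis
    by (simp add: prob_compl F_def)
qed

lemma (in prob_space) indep_pair_products:
  fixes W :: "nat + nat \<Rightarrow> 'a \<Rightarrow> real"
  assumes indep: "indep_vars (\<lambda>_. borel) W UNIV" and int: "\<And>i. integrable M (W i)"
  defines "X t \<omega> \<equiv> W (Inl t) \<omega> * W (Inr t) \<omega>"
  shows "expectation (X t) = expectation (W (Inl t)) * expectation (W (Inr t))"
    and "t \<noteq> t' \<Longrightarrow> integrable M (\<lambda>\<omega>. X t \<omega> * X t' \<omega>)"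
    and "t \<noteq> t' \<Longrightarrow> expectation (\<lambda>\<omega>. X t \<omega> * X t' \<omega>) = expectation (X t) * expectation (X t')"
proof -
  have indep_on: "indep_vars (\<lambda>_. borel) W I" for I
    using indep by (rule indep_vars_subset) simp
  have pair: "X t = (\<lambda>\<omega>. \<Prod>i\<in>{Inl t, Inr t}. W i \<omega>)" for t
    by (simp add: X_def fun_eq_iff)
  show expectation_pair: "expectation (X t) = expectation (W (Inl t)) * expectation (W (Inr t))" for t
    unfolding pair by (subst indep_vars_lebesgue_integral[OF _ indep_on int]) simp_all
  assume "t \<noteq> t'"
  then have quad: "(\<lambda>\<omega>. X t \<omega> * X t' \<omega>) = (\<lambda>\<omega>. \<Prod>i\<in>{Inl t, Inr t, Inl t', Inr t'}. W i \<omega>)"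
    by (simp add: X_def fun_eq_iff ac_simps)
  show "integrable M (\<lambda>\<omega>. X t \<omega> * X t' \<omega>)"
    unfolding quad by (intro indep_vars_integrable indep_on int) simp
  show "expectation (\<lambda>\<omega>. X t \<omega> * X t' \<omega>) = expectation (X t) * expectation (X t')"
    unfolding quad expectation_pair using \<open>t \<noteq> t'\<close>
    by (subst indep_vars_lebesgue_integral[OF _ indep_on int]) (simp_all add: ac_simps)
qed

lemma (in prob_space) indep_vars_comp_service_outcome:
  fixes S :: "nat \<Rightarrow> 'a \<Rightarrow> real" and D :: "nat \<Rightarrow> 'a \<Rightarrow> bool"
    and g :: "real \<Rightarrow> real" and h :: "nat \<Rightarrow> bool \<Rightarrow> real"
  assumes indep: "indep_vars (\<lambda>_. borel) (\<lambda>i \<omega>. case i of Inl t \<Rightarrow> S t \<omega> | Inr t \<Rightarrow> of_bool (D t \<omega>)) UNIV"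
    and [measurable]: "g \<in> borel_measurable borel"
  shows "indep_vars (\<lambda>_. borel) (\<lambda>i \<omega>. case i of Inl t \<Rightarrow> g (S t \<omega>) | Inr t \<Rightarrow> h t (D t \<omega>)) UNIV"
proof -
  define Y where "Y i = (case i of Inl (t::nat) \<Rightarrow> g | Inr t \<Rightarrow> (\<lambda>y::real. h t (y = 1)))" for i
  have "indep_vars (\<lambda>_. borel) (\<lambda>i \<omega>. Y i (case i of Inl t \<Rightarrow> S t \<omega> | Inr t \<Rightarrow> of_bool (D t \<omega>))) UNIV"
    by (rule indep_vars_compose2[OF indep]) (auto simp: Y_def split: sum.split)
  then show ?thesis
    by (rule indep_vars_cong[THEN iffD1, rotated 3]) (auto simp: Y_def split: sum.splits)
qed

lemma (in finite_measure) integrable_square_comp_linear_growth: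
  fixes X :: "'a \<Rightarrow> real" and g :: "real \<Rightarrow> real"
  assumes "integrable M (\<lambda>\<omega>. (X \<omega>)^2)" and [measurable]: "X \<in> borel_measurable M" "g \<in> borel_measurable borel"
    and growth: "\<And>x. \<bar>g x\<bar> \<le> \<bar>x\<bar> + 1"
  shows "integrable M (\<lambda>\<omega>. (g (X \<omega>))^2)"
proof (rule Bochner_Integration.integrable_bound)
  show "integrable M (\<lambda>\<omega>. 2 * (X \<omega>)^2 + 2)"
    using assms(1) by simp
  have "(g x)^2 \<le> 2 * x^2 + 2" for x
  proof -
    have "(g x)^2 \<le> (\<bar>x\<bar> + 1)^2"
      using power_mono[OF growth[of x] abs_ge_zero, of 2] by simp
    also have "\<dots> \<le> 2 * x^2 + 2"
      using zero_le_square[of "\<bar>x\<bar> - 1"] by (simp add: power2_eq_square algebra_simps)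
    finally show ?thesis .
  qed
  then show "AE \<omega> in M. norm ((g (X \<omega>))^2) \<le> norm (2 * (X \<omega>)^2 + 2)"
    by simp
qed measurable

theorem (in prob_space) slln_periodic_nonneg:
  fixes S :: "nat \<Rightarrow> 'a \<Rightarrow> real" and D :: "nat \<Rightarrow> 'a \<Rightarrow> bool"
    and g :: "real \<Rightarrow> real" and h :: "nat \<Rightarrow> bool \<Rightarrow> real"
  assumes K: "K > 0"
    and [measurable]: "\<And>t. S t \<in> borel_measurable M"
    and [measurable]: "\<And>t. D t \<in> measurable M (count_space UNIV)"
    and indep: "indep_vars (\<lambda>_. borel) (\<lambda>i \<omega>. case i of Inl t \<Rightarrow> S t \<omega> | Inr t \<Rightarrow> of_bool (D t \<omega>)) UNIV"
    and S_periodic: "\<And>t. distr M borel (S t) = distr M borel (S (t mod K))"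
    and D_periodic: "\<And>t. prob {\<omega> \<in> space M. \<not> D t \<omega>} = prob {\<omega> \<in> space M. \<not> D (t mod K) \<omega>}"
    and S_square_int: "\<And>t. integrable M (\<lambda>\<omega>. (S t \<omega>)^2)"
    and [measurable]: "g \<in> borel_measurable borel"
    and g_nonneg: "\<And>x. 0 \<le> g x" and g_le: "\<And>x. g x \<le> \<bar>x\<bar> + 1"
    and h_nonneg: "\<And>j b. 0 \<le> h j b" and h_le: "\<And>j b. h j b \<le> 1"
  shows "AE \<omega> in M. (\<lambda>T. (\<Sum>t<T. g (S t \<omega>) * h (t mod K) (D t \<omega>)) / real T)
           \<longlonglongrightarrow> (\<Sum>j<K. expectation (\<lambda>\<omega>. g (S j \<omega>)) * expectation (\<lambda>\<omega>. h j (D j \<omega>))) / real K"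
proof -
  define W where "W i \<omega> = (case i of Inl t \<Rightarrow> g (S t \<omega>) | Inr t \<Rightarrow> h (t mod K) (D t \<omega>))" for i \<omega>
  have indep_W: "indep_vars (\<lambda>_. borel) W UNIV"
    unfolding W_def[abs_def] by (rule indep_vars_comp_service_outcome[OF indep]) measurable
  have g_square_int: "integrable M (\<lambda>\<omega>. (g (S t \<omega>))^2)" for t
  proof (rule integrable_square_comp_linear_growth[OF S_square_int])
    show "\<bar>g x\<bar> \<le> \<bar>x\<bar> + 1" for x
      using g_nonneg[of x] g_le[of x] by simp
  qed measurable
  have W_simps: "W (Inl t) = (\<lambda>\<omega>. g (S t \<omega>))" "W (Inr t) = (\<lambda>\<omega>. h (t mod K) (D t \<omega>))" for t
    by (simp_all add: W_def fun_eq_iff)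
  have W_int: "integrable M (W i)" for i
  proof (cases i)
    case (Inl t)
    show ?thesis
      unfolding Inl W_simps by (rule square_integrable_imp_integrable[OF _ g_square_int]) measurable
  next
    case (Inr t)
    show ?thesis
      unfolding Inr W_simps by (rule integrable_const_bound[where B = 1]) (use h_nonneg h_le in auto)
  qed
  define X where "X t \<omega> = W (Inl t) \<omega> * W (Inr t) \<omega>" for t \<omega>
  have X_eq: "X t \<omega> = g (S t \<omega>) * h (t mod K) (D t \<omega>)" for t \<omega>
    by (simp add: X_def W_def)
  have [measurable]: "X t \<in> borel_measurable M" for t
    unfolding X_eq[abs_def] by measurable
  have X_square: "(X t \<omega>)^2 \<le> (g (S t \<omega>))^2" for t \<omega>
    unfolding X_eq power_mult_distrib using g_nonneg h_nonneg h_le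
    by (intro mult_left_le power_le_one) auto
  have X_square_int: "integrable M (\<lambda>\<omega>. (X t \<omega>)^2)" for t
  proof (rule Bochner_Integration.integrable_bound)
    show "AE \<omega> in M. norm ((X t \<omega>)^2) \<le> norm ((g (S t \<omega>))^2)"
      using X_square by simp
  qed (use g_square_int in measurable)
  have g_periodic: "expectation (\<lambda>\<omega>. \<phi> (S t \<omega>)) = expectation (\<lambda>\<omega>. \<phi> (S (t mod K) \<omega>))"
    if "\<phi> \<in> borel_measurable borel" for \<phi> :: "real \<Rightarrow> real" and t
    using that S_periodic by (intro expectation_comp_eq_of_distr_eq[where X = "S t" and Y = "S (t mod K)"]) simp_all
  define C where "C = (\<Sum>j<K. expectation (\<lambda>\<omega>. (g (S j \<omega>))^2))"
  have X_bound: "expectation (\<lambda>\<omega>. (X t \<omega>)^2) \<le> C" for t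
  proof -
    have "expectation (\<lambda>\<omega>. (X t \<omega>)^2) \<le> expectation (\<lambda>\<omega>. (g (S t \<omega>))^2)"
      using X_square_int g_square_int X_square by (rule integral_mono)
    also have "\<dots> = expectation (\<lambda>\<omega>. (g (S (t mod K) \<omega>))^2)"
      by (rule g_periodic) measurable
    also have "\<dots> \<le> C"
      unfolding C_def using K by (intro member_le_sum integral_nonneg_AE) auto
    finally show ?thesis .
  qed
  have "expectation (X t)
      = expectation (\<lambda>\<omega>. g (S (t mod K) \<omega>)) * expectation (\<lambda>\<omega>. h (t mod K) (D (t mod K) \<omega>))" for t
  proof -
    have "expectation (W (Inl t)) = expectation (\<lambda>\<omega>. g (S (t mod K) \<omega>))"
      unfolding W_simps by (rule g_periodic) measurable
    moreover have "expectation (W (Inr t)) = expectation (\<lambda>\<omega>. h (t mod K) (D (t mod K) \<omega>))"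
      unfolding W_simps by (simp add: expectation_fun_of_bool D_periodic[of t])
    ultimately show ?thesis
      unfolding X_def indep_pair_products(1)[OF indep_W W_int] by simp
  qed
  then have mean_lim: "(\<lambda>T. (\<Sum>t<T. expectation (X t)) / real T)
      \<longlonglongrightarrow> (\<Sum>j<K. expectation (\<lambda>\<omega>. g (S j \<omega>)) * expectation (\<lambda>\<omega>. h j (D j \<omega>))) / real K"
    using LIMSEQ_avg_periodic[OF K] by simp
  have "AE \<omega> in M. (\<lambda>T. (\<Sum>t<T. X t \<omega>) / real T)
      \<longlonglongrightarrow> (\<Sum>j<K. expectation (\<lambda>\<omega>. g (S j \<omega>)) * expectation (\<lambda>\<omega>. h j (D j \<omega>))) / real K"
  proof (rule slln_uncorrelated_nonneg[OF _ _ X_square_int X_bound _ _ mean_lim])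
    show "0 \<le> X t \<omega>" for t \<omega>
      unfolding X_eq using g_nonneg h_nonneg by simp
    show "integrable M (\<lambda>\<omega>. X t \<omega> * X t' \<omega>)"
      and "expectation (\<lambda>\<omega>. X t \<omega> * X t' \<omega>) = expectation (X t) * expectation (X t')"
      if "t \<noteq> t'" for t t'
      unfolding X_def using indep_pair_products(2,3)[OF indep_W W_int that] by simp_all
  qed measurable
  then show ?thesis
    unfolding X_eq .
qed

corollary (in prob_space) slln_periodic:
  fixes S :: "nat \<Rightarrow> 'a \<Rightarrow> real" and D :: "nat \<Rightarrow> 'a \<Rightarrow> bool" and h :: "nat \<Rightarrow> bool \<Rightarrow> real"
  assumes K: "K > 0"
    and [measurable]: "\<And>t. S t \<in> borel_measurable M"
    and [measurable]: "\<And>t. D t \<in> measurable M (count_space UNIV)"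
    and indep: "indep_vars (\<lambda>_. borel) (\<lambda>i \<omega>. case i of Inl t \<Rightarrow> S t \<omega> | Inr t \<Rightarrow> of_bool (D t \<omega>)) UNIV"
    and S_periodic: "\<And>t. distr M borel (S t) = distr M borel (S (t mod K))"
    and D_periodic: "\<And>t. prob {\<omega> \<in> space M. \<not> D t \<omega>} = prob {\<omega> \<in> space M. \<not> D (t mod K) \<omega>}"
    and S_square_int: "\<And>t. integrable M (\<lambda>\<omega>. (S t \<omega>)^2)"
    and h_nonneg: "\<And>j b. 0 \<le> h j b" and h_le: "\<And>j b. h j b \<le> 1"
  shows "AE \<omega> in M. (\<lambda>T. (\<Sum>t<T. S t \<omega> * h (t mod K) (D t \<omega>)) / real T)
           \<longlonglongrightarrow> (\<Sum>j<K. expectation (S j) * expectation (\<lambda>\<omega>. h j (D j \<omega>))) / real K"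
proof -
  have max_parts: "max x 0 - max (- x) 0 = x" for x :: real
    by simp
  have "expectation (\<lambda>\<omega>. max (S j \<omega>) 0) - expectation (\<lambda>\<omega>. max (- S j \<omega>) 0) = expectation (S j)" for j
  proof -
    have "integrable M (S j)"
      using S_square_int by (rule square_integrable_imp_integrable[rotated]) simp
    then show ?thesis
      by (simp add: max_parts flip: Bochner_Integration.integral_diff)
  qed
  then have limit_eq: "(\<Sum>j<K. expectation (\<lambda>\<omega>. max (S j \<omega>) 0) * expectation (\<lambda>\<omega>. h j (D j \<omega>))) / real K
      - (\<Sum>j<K. expectation (\<lambda>\<omega>. max (- S j \<omega>) 0) * expectation (\<lambda>\<omega>. h j (D j \<omega>))) / real K
      = (\<Sum>j<K. expectation (S j) * expectation (\<lambda>\<omega>. h j (D j \<omega>))) / real K"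
    by (simp add: diff_divide_distrib[symmetric] sum_subtractf[symmetric] left_diff_distrib[symmetric])
  have average_eq: "(\<Sum>t<T. max (S t \<omega>) 0 * h (t mod K) (D t \<omega>)) / real T
      - (\<Sum>t<T. max (- S t \<omega>) 0 * h (t mod K) (D t \<omega>)) / real T
      = (\<Sum>t<T. S t \<omega> * h (t mod K) (D t \<omega>)) / real T" for T \<omega>
    by (simp add: diff_divide_distrib[symmetric] sum_subtractf[symmetric] left_diff_distrib[symmetric]
        max_parts)
  have "AE \<omega> in M. (\<lambda>T. (\<Sum>t<T. max (S t \<omega>) 0 * h (t mod K) (D t \<omega>)) / real T)
      \<longlonglongrightarrow> (\<Sum>j<K. expectation (\<lambda>\<omega>. max (S j \<omega>) 0) * expectation (\<lambda>\<omega>. h j (D j \<omega>))) / real K"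
    by (rule slln_periodic_nonneg[where g = "\<lambda>x. max x 0", OF K _ _ indep S_periodic D_periodic S_square_int _ _ _ h_nonneg h_le])
      simp_all
  moreover have "AE \<omega> in M. (\<lambda>T. (\<Sum>t<T. max (- S t \<omega>) 0 * h (t mod K) (D t \<omega>)) / real T)
      \<longlonglongrightarrow> (\<Sum>j<K. expectation (\<lambda>\<omega>. max (- S j \<omega>) 0) * expectation (\<lambda>\<omega>. h j (D j \<omega>))) / real K"
    by (rule slln_periodic_nonneg[where g = "\<lambda>x. max (- x) 0", OF K _ _ indep S_periodic D_periodic S_square_int _ _ _ h_nonneg h_le])
      simp_all
  ultimately show ?thesis
  proof eventually_elim
    case (elim \<omega>)
    from tendsto_diff[OF elim] show ?case
      unfolding average_eq limit_eq .
  qed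
qed

section \<open>Counting over one period of the pattern\<close>

lemma set_positions: "set (positions P n) = {j. j < length P \<and> P ! j = n}"
  unfolding positions_def by auto

lemma sorted_positions: "sorted_wrt (<) (positions P n)"
  unfolding positions_def by (simp add: sorted_wrt_filter)

lemma length_positions: "length (positions P n) = alpha P n"
  unfolding positions_def alpha_def length_filter_conv_card
  by (intro arg_cong[where f = card]) auto

lemma alpha_le_length: "alpha P n \<le> length P"
  unfolding alpha_def by (rule length_filter_le)

lemma sum_pattern_indicator:
  fixes f :: "nat \<Rightarrow> real"
  shows "(\<Sum>j<length P. of_bool (P ! j = n) * f (P ! j)) = real (alpha P n) * f n"
proof -
  have "(\<Sum>j<length P. of_bool (P ! j = n) * f (P ! j)) = (\<Sum>j<length P. of_bool (P ! j = n)) * f n"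
    unfolding sum_distrib_right by (intro sum.cong) auto
  also have "(\<Sum>j<length P. of_bool (P ! j = n) :: real) = real (alpha P n)"
    by (simp add: alpha_def length_filter_conv_card Int_def)
  finally show ?thesis .
qed

lemma sum_pattern_eq_sum_alpha:
  fixes s :: "nat \<Rightarrow> real"
  assumes "\<forall>k<length P. P ! k \<in> {1..N}"
  shows "(\<Sum>j<length P. s (P ! j)) = (\<Sum>m\<in>{1..N}. real (alpha P m) * s m)"
proof -
  have "(\<Sum>j<length P. s (P ! j)) = (\<Sum>j<length P. \<Sum>m\<in>{1..N}. of_bool (P ! j = m) * s (P ! j))"
    using assms by (intro sum.cong) (auto simp: if_distrib[of "\<lambda>c. c * _"] sum.delta' cong: if_cong)
  also have "\<dots> = (\<Sum>m\<in>{1..N}. real (alpha P m) * s m)"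
    by (subst sum.swap) (simp add: sum_pattern_indicator)
  finally show ?thesis .
qed

lemma sum_greaterThanLessThan_split:
  fixes f :: "nat \<Rightarrow> real"
  assumes "a < b" "b < c"
  shows "(\<Sum>j\<in>{a<..<c}. f j) = (\<Sum>j\<in>{a<..<b}. f j) + f b + (\<Sum>j\<in>{b<..<c}. f j)"
proof -
  have "{a<..<c} = {a<..<b} \<union> {b} \<union> {b<..<c}"
    using assms by auto
  then show ?thesis
    by (simp add: sum.union_disjoint)
qed

lemma sum_gap_mean:
  fixes s :: "nat \<Rightarrow> real"
  assumes "alpha P n \<ge> 1"
  shows "(\<Sum>k<alpha P n. gap_mean P s n k) = (\<Sum>j<length P. s (P ! j)) - real (alpha P n) * s n"
proof -
  define js where "js = positions P n"
  define K where "K = length P"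
  define L where "L = alpha P n"
  define f where "f j = s (P ! (j mod K))" for j
  define stop where "stop k = (if Suc k < L then js ! Suc k else js ! 0 + K)" for k
  have L: "length js = L" "L \<ge> 1"
    using assms by (simp_all add: js_def L_def length_positions)
  have js_pos: "js ! k < K \<and> P ! (js ! k) = n" if "k < L" for k
    using nth_mem[of k js] that L by (simp add: js_def K_def set_positions)
  have js_less: "js ! i < js ! j" if "i < j" "j < L" for i j
    using sorted_wrt_nth_less[OF sorted_positions, of i j P n] that L by (simp add: js_def)
  have "K > 0"
    using js_pos[of 0] L by simp
  have gap: "gap_mean P s n k = (\<Sum>j\<in>{js ! k<..<stop k}. f j)" for k
    unfolding gap_mean_def stop_def f_def Let_def js_def[symmetric] K_def[symmetric] L ..
  have stop_gt: "js ! k < stop k" if "k < L" for k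
    using js_less[of k "Suc k"] js_pos[OF that] by (simp add: stop_def)
  have partial: "(\<Sum>j\<in>{js ! 0<..<stop k}. f j) = (\<Sum>i\<le>k. gap_mean P s n i) + real k * s n"
    if "k < L" for k
    using that
  proof (induction k)
    case (Suc k)
    have "(\<Sum>j\<in>{js ! 0<..<stop (Suc k)}. f j)
        = (\<Sum>j\<in>{js ! 0<..<js ! Suc k}. f j) + f (js ! Suc k) + (\<Sum>j\<in>{js ! Suc k<..<stop (Suc k)}. f j)"
      using js_less[of 0 "Suc k"] stop_gt[of "Suc k"] Suc.prems
      by (intro sum_greaterThanLessThan_split) auto
    moreover have "stop k = js ! Suc k"
      using Suc.prems by (simp add: stop_def)
    moreover have "f (js ! Suc k) = s n"
      using js_pos[OF Suc.prems] by (simp add: f_def)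
    ultimately show ?case
      using Suc by (simp add: gap algebra_simps)
  qed (simp add: gap)
  have "(\<Sum>j\<in>{js ! 0..<js ! 0 + K}. f j) = (\<Sum>j<K. s (P ! j))"
    unfolding f_def by (rule sum_mod_window[OF \<open>K > 0\<close>])
  moreover have "(\<Sum>j\<in>{js ! 0..<js ! 0 + K}. f j) = f (js ! 0) + (\<Sum>j\<in>{js ! 0<..<js ! 0 + K}. f j)"
    using \<open>K > 0\<close> by (simp add: sum.atLeast_Suc_lessThan atLeastSucLessThan_greaterThanLessThan)
  moreover have "f (js ! 0) = s n"
    using js_pos[of 0] L by (simp add: f_def)
  moreover have "stop (L - 1) = js ! 0 + K"
    using L by (simp add: stop_def)
  ultimately have "(\<Sum>j<K. s (P ! j)) = s n + (\<Sum>i<L. gap_mean P s n i) + real (L - 1) * s n"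
    using partial[of "L - 1"] L by (simp add: lessThan_Suc_atMost[symmetric])
  then show ?thesis
    using L by (simp add: K_def L_def of_nat_diff algebra_simps)
qed

section \<open>The cyclic schedule\<close>

text \<open>Transmission \<open>t\<close> is made by source \<open>P ! (t mod length P)\<close>; it takes time \<open>S t\<close> and
  succeeds iff \<open>D t\<close>.\<close>

locale cyclic_schedule = prob_space M
  for M :: "'a measure" and P :: "nat list"
    and S :: "nat \<Rightarrow> 'a \<Rightarrow> real" and D :: "nat \<Rightarrow> 'a \<Rightarrow> bool" and s p :: "nat \<Rightarrow> real" +
  assumes nonempty: "length P > 0"
    and S_measurable [measurable]: "\<And>t. S t \<in> borel_measurable M"
    and D_measurable [measurable]: "\<And>t. D t \<in> measurable M (count_space UNIV)"
    and indep: "indep_vars (\<lambda>_. borel) (\<lambda>i \<omega>. case i of Inl t \<Rightarrow> S t \<omega> | Inr t \<Rightarrow> of_bool (D t \<omega>)) UNIV"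
    and S_distr: "\<And>t t'. P ! (t mod length P) = P ! (t' mod length P) \<Longrightarrow>
          distr M borel (S t) = distr M borel (S t')"
    and S_square_int: "\<And>t. integrable M (\<lambda>\<omega>. (S t \<omega>)^2)"
    and S_mean: "\<And>t. expectation (S t) = s (P ! (t mod length P))"
    and D_fail: "\<And>t. prob {\<omega> \<in> space M. \<not> D t \<omega>} = p (P ! (t mod length P))"
begin

lemma S_periodic: "distr M borel (S t) = distr M borel (S (t mod length P))"
  by (rule S_distr) simp

lemma D_periodic: "prob {\<omega> \<in> space M. \<not> D t \<omega>} = prob {\<omega> \<in> space M. \<not> D (t mod length P) \<omega>}"
  by (simp add: D_fail)

lemma expectation_fun_of_D:
  assumes "j < length P"
  shows "expectation (\<lambda>\<omega>. f (D j \<omega>)) = f True * (1 - p (P ! j)) + f False * p (P ! j)"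
  using assms D_fail[of j] by (simp add: expectation_fun_of_bool)

lemma density_succ_set:
  "AE \<omega> in M. (\<lambda>T. real (card ({..<T} \<inter> succ_set P D n \<omega>)) / real T)
     \<longlonglongrightarrow> real (alpha P n) * (1 - p n) / real (length P)"
proof -
  have "AE \<omega> in M. (\<lambda>T. (\<Sum>t<T. 1 * of_bool (P ! (t mod length P) = n \<and> D t \<omega>)) / real T)
      \<longlonglongrightarrow> (\<Sum>j<length P. expectation (\<lambda>\<omega>. 1) * expectation (\<lambda>\<omega>. of_bool (P ! j = n \<and> D j \<omega>)))
           / real (length P)"
    by (rule slln_periodic_nonneg[where g = "\<lambda>_. 1" and h = "\<lambda>j b. of_bool (P ! j = n \<and> b)",
          OF nonempty S_measurable D_measurable indep S_periodic D_periodic S_square_int]) simp_all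
  moreover have "(\<Sum>t<T. 1 * of_bool (P ! (t mod length P) = n \<and> D t \<omega>))
      = real (card ({..<T} \<inter> succ_set P D n \<omega>))" for T \<omega>
    by (simp add: succ_set_def Int_def)
  moreover have "(\<Sum>j<length P. expectation (\<lambda>\<omega>. 1) * expectation (\<lambda>\<omega>. of_bool (P ! j = n \<and> D j \<omega>)))
      = (\<Sum>j<length P. of_bool (P ! j = n) * (1 - p (P ! j)))"
    by (intro sum.cong) (simp_all add: expectation_fun_of_D prob_space)
  ultimately show ?thesis
    by (simp add: sum_pattern_indicator[of P n "\<lambda>m. 1 - p m"])
qed

lemma average_outside_succ_set:
  "AE \<omega> in M. (\<lambda>T. (\<Sum>t<T. of_bool (t \<notin> succ_set P D n \<omega>) * S t \<omega>) / real T)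
     \<longlonglongrightarrow> ((\<Sum>j<length P. s (P ! j)) - real (alpha P n) * (s n * (1 - p n))) / real (length P)"
proof -
  have "AE \<omega> in M. (\<lambda>T. (\<Sum>t<T. S t \<omega> * of_bool (\<not> (P ! (t mod length P) = n \<and> D t \<omega>))) / real T)
      \<longlonglongrightarrow> (\<Sum>j<length P. expectation (S j) * expectation (\<lambda>\<omega>. of_bool (\<not> (P ! j = n \<and> D j \<omega>))))
           / real (length P)"
    by (rule slln_periodic[where h = "\<lambda>j b. of_bool (\<not> (P ! j = n \<and> b))",
          OF nonempty S_measurable D_measurable indep S_periodic D_periodic S_square_int]) simp_all
  moreover have "(\<Sum>t<T. S t \<omega> * of_bool (\<not> (P ! (t mod length P) = n \<and> D t \<omega>)))
      = (\<Sum>t<T. of_bool (t \<notin> succ_set P D n \<omega>) * S t \<omega>)" for T \<omega>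
    by (intro sum.cong) (auto simp: succ_set_def)
  moreover have "(\<Sum>j<length P. expectation (S j) * expectation (\<lambda>\<omega>. of_bool (\<not> (P ! j = n \<and> D j \<omega>))))
      = (\<Sum>j<length P. s (P ! j) - of_bool (P ! j = n) * (s (P ! j) * (1 - p (P ! j))))"
  proof (intro sum.cong refl)
    fix j assume "j \<in> {..<length P}"
    then show "expectation (S j) * expectation (\<lambda>\<omega>. of_bool (\<not> (P ! j = n \<and> D j \<omega>)))
        = s (P ! j) - of_bool (P ! j = n) * (s (P ! j) * (1 - p (P ! j)))"
      by (subst expectation_fun_of_D[of j "\<lambda>b. of_bool (\<not> (P ! j = n \<and> b))"])
        (simp_all add: S_mean algebra_simps)
  qed
  ultimately show ?thesis
    by (simp add: sum_subtractf sum_pattern_indicator[of P n "\<lambda>m. s m * (1 - p m)"])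
qed

theorem Stilde_average:
  assumes "alpha P n > 0" and "p n < 1"
  shows "AE \<omega> in M. (\<lambda>k. (\<Sum>i=1..k. Stilde P S D n i \<omega>) / real k)
           \<longlonglongrightarrow> (\<Sum>j<length P. s (P ! j)) / (real (alpha P n) * (1 - p n)) - s n"
  using density_succ_set[of n] average_outside_succ_set[of n]
proof eventually_elim
  case (elim \<omega>)
  define G where "G = (\<Sum>j<length P. s (P ! j))"
  have "real (alpha P n) * (1 - p n) / real (length P) > 0"
    using assms nonempty by simp
  from LIMSEQ_avg_sum_between_enumerate[OF elim(1) this elim(2)]
  have "(\<lambda>k. (\<Sum>i=1..k. Stilde P S D n i \<omega>) / real k)
      \<longlonglongrightarrow> ((G - real (alpha P n) * (s n * (1 - p n))) / real (length P))
           / (real (alpha P n) * (1 - p n) / real (length P))"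
    by (simp add: Stilde_def G_def)
  moreover have "((G - real (alpha P n) * (s n * (1 - p n))) / real (length P))
      / (real (alpha P n) * (1 - p n) / real (length P)) = G / (real (alpha P n) * (1 - p n)) - s n"
    using assms nonempty by (simp add: field_simps)
  ultimately show ?case
    by (simp add: G_def)
qed

end

theorem mainTheorem7:
  fixes M :: "'a measure" and N n :: nat and P :: "nat list"
    and S :: "nat \<Rightarrow> 'a \<Rightarrow> real" and D :: "nat \<Rightarrow> 'a \<Rightarrow> bool"
    and s p :: "nat \<Rightarrow> real"
  assumes "prob_space M"
    and "\<forall>k<length P. P ! k \<in> {1..N}"
    and "\<forall>m\<in>{1..N}. alpha P m \<ge> 1"
    and "\<forall>t. S t \<in> borel_measurable M"
    and "\<forall>t. D t \<in> measurable M (count_space UNIV)"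
    and "prob_space.indep_vars M (\<lambda>_. borel)
           (\<lambda>i \<omega>. case i of Inl t \<Rightarrow> S t \<omega> | Inr t \<Rightarrow> of_bool (D t \<omega>)) (UNIV :: (nat + nat) set)"
    and "\<forall>t t'. P ! (t mod length P) = P ! (t' mod length P) \<longrightarrow>
           distr M borel (S t) = distr M borel (S t')"
    and "\<forall>t. integrable M (S t) \<and> integrable M (\<lambda>\<omega>. (S t \<omega>)^2)"
    and "\<forall>t. integral\<^sup>L M (S t) = s (P ! (t mod length P))"
    and "\<forall>m\<in>{1..N}. 0 \<le> p m \<and> p m < 1"
    and "\<forall>t. measure M {\<omega>\<in>space M. \<not> D t \<omega>} = p (P ! (t mod length P))"
    and "\<forall>m\<in>{1..N}. s m > 0"
    and "n \<in> {1..N}"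
  shows "(AE \<omega> in M. (\<lambda>K'. (\<Sum>k=1..K'. Stilde P S D n k \<omega>) / real K')
            \<longlonglongrightarrow> (1 / (1 - p n)) * (p n * s n
                 + (1 / real (alpha P n)) * (\<Sum>k=1..alpha P n. gap_mean P s n (k - 1))))
       \<and> (1 / (1 - p n)) * (p n * s n
                 + (1 / real (alpha P n)) * (\<Sum>k=1..alpha P n. gap_mean P s n (k - 1)))
         = (1 / (1 - p n)) * (p n * s n
                 + (1 / real (alpha P n)) * (\<Sum>m\<in>{1..N} - {n}. real (alpha P m) * s m))
       \<and> (1 / (1 - p n)) * (p n * s n
                 + (1 / real (alpha P n)) * (\<Sum>k=1..alpha P n. gap_mean P s n (k - 1)))
         = s n / ((1 - p n) * (real (alpha P n) * s n / (\<Sum>m=1..N. real (alpha P m) * s m))) - s n"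
proof -
  have L: "alpha P n \<ge> 1" and "p n < 1" and "s n > 0"
    using assms(3,10,12,13) by auto
  have "cyclic_schedule M P S D s p"
  proof (intro cyclic_schedule.intro cyclic_schedule_axioms.intro)
    show "length P > 0"
      using L alpha_le_length[of P n] by linarith
    show "distr M borel (S t) = distr M borel (S t')"
      if "P ! (t mod length P) = P ! (t' mod length P)" for t t'
      using assms(7) that by blast
  qed (use assms(1,4-6,8,9,11) in auto)
  then interpret cyclic_schedule M P S D s p .
  define G where "G = (\<Sum>j<length P. s (P ! j))"
  have "G > 0"
    unfolding G_def using nonempty assms(2,12) by (intro sum_pos) auto
  have G_alpha: "(\<Sum>m\<in>{1..N}. real (alpha P m) * s m) = G"
    unfolding G_def by (rule sum_pattern_eq_sum_alpha[OF assms(2), symmetric])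
  have gaps: "(\<Sum>k=1..alpha P n. gap_mean P s n (k - 1)) = G - real (alpha P n) * s n"
    using sum_gap_mean[OF L] by (simp add: G_def sum.atLeast1_atMost_eq)
  have others: "(\<Sum>m\<in>{1..N} - {n}. real (alpha P m) * s m) = G - real (alpha P n) * s n"
    using assms(13) by (simp add: G_alpha[symmetric] sum_diff1)
  have "AE \<omega> in M. (\<lambda>K'. (\<Sum>k=1..K'. Stilde P S D n k \<omega>) / real K')
          \<longlonglongrightarrow> G / (real (alpha P n) * (1 - p n)) - s n"
    unfolding G_def using L \<open>p n < 1\<close> by (intro Stilde_average) simp_all
  moreover have "1 / (1 - p n) * (p n * s n + 1 / real (alpha P n) * (G - real (alpha P n) * s n))
      = G / (real (alpha P n) * (1 - p n)) - s n"
    using L \<open>p n < 1\<close> by (simp add: field_simps)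
  moreover have "G / (real (alpha P n) * (1 - p n)) = s n / ((1 - p n) * (real (alpha P n) * s n / G))"
    using \<open>s n > 0\<close> \<open>G > 0\<close> by simp
  ultimately show ?thesis
    unfolding gaps others G_alpha by simp
qed

end
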